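(* Let $(\mu_\rho)_{0<\rho<1}$ be a family of translation invariant product probability measures on $\mathbb{N}^{\mathbb{Z}^d}$ satisfying: (i) $G_\rho(t)=\mathbb{E}_{\mu_\rho}(e^{t\eta(0)})<\infty$ for all $t\in\mathbb{R}$; (ii) $\mathbb{E}_{\mu_\rho}(\eta(0))=\rho$; (iii) whenever $a_\rho\ge0$ with $a_\rho\to\infty$ as $\rho\to0$, also $\sup\{x:G_\rho(x)\le a_\rho\}\to\infty$ as $\rho\to0$. Then for all $\rho$ sufficiently small there is a constant $\gamma_d=\gamma_d(d,\rho)>0$ such that for all $n$, $\mathbb{P}_{\mu_\rho}(|\mathcal{W}_\infty(0)|\ge n)\le e^{-\gamma_dn}$.
   Context: Sandpile model on $\mathbb{Z}^d$: $\eta\in\mathbb{N}^{\mathbb{Z}^d}$, site $x$ unstable if $\eta(x)\ge 2d$; toppling $x$ removes $2d$ grains from $x$ and adds one to each of its $2d$ nearest neighbors. A configuration $\eta$ is stabilizable if there is a legal toppling procedure (topplings of unstable sites only, occurring at times in $[0,\infty)$, finitely many per site in bounded time, no infinite backward chain of topplings at neighboring sites at decreasing times) in which every site topples finitely often and the final configuration $\eta_\infty$ is stable ($\eta_\infty(x)\le 2d-1$ for all $x$); the number of topplings at each site and $\eta_\infty$ do not depend on the stabilizing procedure. (Translation invariant measures with density $<d$ are known to be stabilizable.) For stabilizable $\eta$, let $\mathcal{T}_\infty$ be the set of sites that topple at least once during stabilization, $\mathcal{V}_\infty=\{x:\eta_\infty(x)>0\}$, $\mathcal{W}_\infty=\mathcal{T}_\infty\cup\mathcal{V}_\infty$,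 and $\mathcal{W}_\infty(0)$ the connected component (nearest-neighbor adjacency) of $\mathcal{W}_\infty$ containing the origin (empty if $0\notin\mathcal{W}_\infty$); $|\cdot|$ denotes cardinality. *)

theory Defs
  imports "HOL-Probability.Probability"
begin

text \<open>Sites of the lattice Z^d are integer vectors indexed by a finite type 'd,
  so d = CARD('d). Configurations are maps from sites to nat.\<close>

type_synonym 'd site = "int ^ 'd"
type_synonym 'd config = "'d site \<Rightarrow> nat"

definition adj :: "'d::finite site \<Rightarrow> 'd site \<Rightarrow> bool" where
  "adj x y \<longleftrightarrow> (\<Sum>i\<in>UNIV. \<bar>x $ i - y $ i\<bar>) = 1"

definition nbrs :: "'d::finite site \<Rightarrow> 'd site set" where
  "nbrs x = {y. adj x y}"

text \<open>A toppling procedure: T x is the set of times at which site x topples.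
  The configuration just before time s (topplings at times strictly before s counted).\<close>

definition before :: "'d::finite config \<Rightarrow> ('d site \<Rightarrow> real set) \<Rightarrow> real \<Rightarrow> 'd site \<Rightarrow> int" where
  "before \<eta> T s x = int (\<eta> x) - 2 * int CARD('d) * int (card {t \<in> T x. t < s})
      + (\<Sum>y\<in>nbrs x. int (card {t \<in> T y. t < s}))"

definition legal_procedure :: "'d::finite config \<Rightarrow> ('d site \<Rightarrow> real set) \<Rightarrow> bool" where
  "legal_procedure \<eta> T \<longleftrightarrow>
     (\<forall>x. T x \<subseteq> {0..}) \<and>
     (\<forall>x t. finite (T x \<inter> {0..t})) \<and>
     (\<forall>x s. s \<in> T x \<longrightarrow> before \<eta> T s x \<ge> 2 * int CARD('d)) \<and>
     \<not> (\<exists>xs ts :: nat \<Rightarrow> _. \<forall>k. ts k \<in> T (xs k) \<and> adj (xs k) (xs (Suc k)) \<and> ts (Suc k) < ts k)"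

definition final_config :: "'d::finite config \<Rightarrow> ('d site \<Rightarrow> real set) \<Rightarrow> 'd site \<Rightarrow> int" where
  "final_config \<eta> T x = int (\<eta> x) - 2 * int CARD('d) * int (card (T x))
      + (\<Sum>y\<in>nbrs x. int (card (T y)))"

definition stabilizing :: "'d::finite config \<Rightarrow> ('d site \<Rightarrow> real set) \<Rightarrow> bool" where
  "stabilizing \<eta> T \<longleftrightarrow> legal_procedure \<eta> T \<and> (\<forall>x. finite (T x)) \<and>
      (\<forall>x. final_config \<eta> T x \<le> 2 * int CARD('d) - 1)"

definition stabilizable :: "'d::finite config \<Rightarrow> bool" where
  "stabilizable \<eta> \<longleftrightarrow> (\<exists>T. stabilizing \<eta> T)"

text \<open>Odometer and final configuration do not depend on the stabilizing procedure
  (known fact), so we may pick any one.\<close>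

definition stab_proc :: "'d::finite config \<Rightarrow> 'd site \<Rightarrow> real set" where
  "stab_proc \<eta> = (SOME T. stabilizing \<eta> T)"

definition T_inf :: "'d::finite config \<Rightarrow> 'd site set" where
  "T_inf \<eta> = {x. stab_proc \<eta> x \<noteq> {}}"

definition V_inf :: "'d::finite config \<Rightarrow> 'd site set" where
  "V_inf \<eta> = {x. final_config \<eta> (stab_proc \<eta>) x > 0}"

definition W_inf :: "'d::finite config \<Rightarrow> 'd site set" where
  "W_inf \<eta> = T_inf \<eta> \<union> V_inf \<eta>"

definition component :: "'d::finite site set \<Rightarrow> 'd site \<Rightarrow> 'd site set" where
  "component W z = (if z \<in> W then {y. (z, y) \<in> {(a, b). a \<in> W \<and> b \<in> W \<and> adj a b}\<^sup>*} else {})"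

definition W_inf0 :: "'d::finite config \<Rightarrow> 'd site set" where
  "W_inf0 \<eta> = component (W_inf \<eta>) 0"

definition prod_measure :: "nat pmf \<Rightarrow> ('d::finite config) measure" where
  "prod_measure p = PiM UNIV (\<lambda>_. measure_pmf p)"

definition mgf :: "nat pmf \<Rightarrow> real \<Rightarrow> real" where
  "mgf p t = measure_pmf.expectation p (\<lambda>k. exp (t * real k))"

end

theory Submission
  imports Defs "HOL-Real_Asymp.Real_Asymp"
begin

text \<open>
  Every finite connected set \<open>C\<close> of sites that topple, hold grains at the end, or neighbour a
  toppling site lies in a connected set \<open>G\<close> with \<open>|G| \<le> 2 \<Sum>x\<in>G. \<eta> x\<close>: close \<open>C\<close> under
  toppling sites and their neighbours; in the closure every site left empty has toppled, its
  neighbour in a fixed direction ends up occupied, and conservation of grains bounds the number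
  of occupied sites by the initial mass of \<open>G\<close>.

  A connected set of \<open>m\<close> sites containing a given site is traced by a walk of \<open>2 (m - 1)\<close> unit
  steps, so there are at most \<open>(2 d) ^ (2 m)\<close> of them, and by Chernoff's bound the probability
  that one of them has density at least \<open>1/2\<close> is at most \<open>q ^ m\<close> with
  \<open>q = 4 d\<^sup>2 exp (- s / 2) mgf s\<close>. The growth condition makes \<open>mgf s \<le> 2\<close> for small \<open>\<rho>\<close>, hence
  \<open>q \<le> 1/4\<close> for \<open>s = 2 ln (32 d\<^sup>2)\<close>, and summing over sizes \<open>\<ge> n\<close> gives the tail \<open>2 ^ (- n)\<close>.
  By Borel-Cantelli, almost surely no site lies in dense connected sets of unbounded size; then
  parallel toppling stabilizes the configuration and the cluster of the origin is finite.
\<close>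

definition unit_site :: "'d::finite \<Rightarrow> 'd site" where
  "unit_site i = (\<chi> j. if j = i then 1 else 0)"

definition unit_steps :: "'d::finite site set" where
  "unit_steps = range unit_site \<union> range (\<lambda>i. - unit_site i)"

lemma adj_commute: "adj x y \<longleftrightarrow> adj y x"
  unfolding adj_def by (simp add: abs_minus_commute)

lemma adj_add_unit_site: "adj x (x + unit_site i)"
proof -
  have "(\<Sum>j\<in>UNIV. \<bar>x $ j - (x + unit_site i) $ j\<bar>) = (\<Sum>j\<in>UNIV. if j = i then 1 else 0)"
    by (rule sum.cong) (auto simp: unit_site_def)
  then show ?thesis by (simp add: adj_def)
qed

lemma adj_imp_diff_in_unit_steps:
  assumes "adj x y"
  shows "y - x \<in> unit_steps"
proof -
  define f where "f j = \<bar>x $ j - y $ j\<bar>" for j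
  have sum_f: "(\<Sum>j\<in>UNIV. f j) = 1"
    using assms by (simp add: adj_def f_def)
  then obtain i where "f i \<noteq> 0"
    by (metis sum.neutral zero_neq_one)
  then have "f i \<ge> 1"
    by (simp add: f_def)
  moreover have "(\<Sum>j\<in>UNIV. f j) = f i + (\<Sum>j\<in>UNIV - {i}. f j)"
    by (simp add: sum.remove)
  moreover have "(\<Sum>j\<in>UNIV - {i}. f j) \<ge> 0"
    by (simp add: f_def sum_nonneg)
  ultimately have "f i = 1" and "(\<Sum>j\<in>UNIV - {i}. f j) = 0"
    using sum_f by linarith+
  then have "\<forall>j. j \<noteq> i \<longrightarrow> f j = 0"
    by (subst (asm) sum_nonneg_eq_0_iff) (auto simp: f_def)
  then have "\<forall>j. j \<noteq> i \<longrightarrow> y $ j = x $ j" and "y $ i = x $ i + 1 \<or> y $ i = x $ i - 1"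
    using \<open>f i = 1\<close> by (auto simp: f_def abs_if split: if_splits)
  then have "y - x = unit_site i \<or> y - x = - unit_site i"
    by (auto simp: vec_eq_iff unit_site_def)
  then show ?thesis
    by (auto simp: unit_steps_def)
qed

lemma card_unit_steps_le: "card (unit_steps :: 'd::finite site set) \<le> 2 * CARD('d)"
proof -
  have "card (unit_steps :: 'd site set)
      \<le> card (range (unit_site :: 'd \<Rightarrow> _)) + card (range (\<lambda>i::'d. - unit_site i))"
    unfolding unit_steps_def by (rule card_Un_le)
  also have "\<dots> \<le> CARD('d) + CARD('d)"
    by (intro add_mono card_image_le) auto
  finally show ?thesis by simp
qed

lemma finite_unit_steps [simp]: "finite (unit_steps :: 'd::finite site set)"
  by (simp add: unit_steps_def)

lemma in_nbrs_iff: "y \<in> nbrs x \<longleftrightarrow> adj x y"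
  by (simp add: nbrs_def)

lemma nbrs_subset_unit_steps: "nbrs x \<subseteq> (+) x ` unit_steps"
proof
  fix y assume "y \<in> nbrs x"
  then have "y - x \<in> unit_steps"
    by (simp add: in_nbrs_iff adj_imp_diff_in_unit_steps)
  then show "y \<in> (+) x ` unit_steps"
    by (force intro: image_eqI[of _ _ "y - x"])
qed

lemma finite_nbrs [simp]: "finite (nbrs x)"
  using nbrs_subset_unit_steps by (rule finite_subset) simp

lemma card_nbrs_le: "card (nbrs (x :: 'd::finite site)) \<le> 2 * CARD('d)"
proof -
  have "card (nbrs x) \<le> card ((+) x ` unit_steps)"
    by (rule card_mono[OF _ nbrs_subset_unit_steps]) simp
  also have "\<dots> \<le> card (unit_steps :: 'd site set)"
    by (rule card_image_le) simp
  finally show ?thesis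
    using card_unit_steps_le by (rule order.trans)
qed

section \<open>Connected sets of sites\<close>

definition edges_in :: "'d::finite site set \<Rightarrow> ('d site \<times> 'd site) set" where
  "edges_in C = {(a, b). a \<in> C \<and> b \<in> C \<and> adj a b}"

definition connected_from :: "'d::finite site set \<Rightarrow> 'd site \<Rightarrow> bool" where
  "connected_from C z \<longleftrightarrow> z \<in> C \<and> (\<forall>y\<in>C. (z, y) \<in> (edges_in C)\<^sup>*)"

definition animals :: "'d::finite site \<Rightarrow> nat \<Rightarrow> 'd site set set" where
  "animals z m = {G. finite G \<and> connected_from G z \<and> card G = m}"

lemma component_eq: "component W z = (if z \<in> W then {y. (z, y) \<in> (edges_in W)\<^sup>*} else {})"
  by (simp add: component_def edges_in_def)

lemma rtrancl_edges_in_mono: "C \<subseteq> G \<Longrightarrow> (edges_in C)\<^sup>* \<subseteq> (edges_in G)\<^sup>*"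
  by (rule rtrancl_mono) (auto simp: edges_in_def)

lemma connected_from_singleton: "connected_from {z} z"
  by (simp add: connected_from_def)

lemma connected_from_Un:
  assumes "connected_from A z" "connected_from B z"
  shows "connected_from (A \<union> B) z"
  using assms rtrancl_edges_in_mono[of A "A \<union> B"] rtrancl_edges_in_mono[of B "A \<union> B"]
  unfolding connected_from_def by blast

lemma connected_from_UN:
  assumes "finite Y" "\<And>y. y \<in> Y \<Longrightarrow> connected_from (C y) z"
  shows "connected_from ({z} \<union> (\<Union>y\<in>Y. C y)) z"
  using assms
proof (induction Y rule: finite_induct)
  case empty
  then show ?case by (simp add: connected_from_singleton)
next
  case (insert y Y)
  then have "connected_from (({z} \<union> (\<Union>y\<in>Y. C y)) \<union> C y) z"
    by (intro connected_from_Un[of "{z} \<union> (\<Union>y\<in>Y. C y)"]) auto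
  then show ?case by (simp add: Un_ac)
qed

lemma connected_from_insert_adj:
  assumes "connected_from C z" "y \<in> C" "adj y b"
  shows "connected_from (insert b C) z"
proof -
  have "(z, y) \<in> (edges_in (insert b C))\<^sup>*"
    using assms rtrancl_edges_in_mono[of C "insert b C"] by (auto simp: connected_from_def)
  moreover have "(y, b) \<in> edges_in (insert b C)"
    using assms by (auto simp: edges_in_def)
  ultimately have "(z, b) \<in> (edges_in (insert b C))\<^sup>*"
    by (rule rtrancl_into_rtrancl)
  then show ?thesis
    using assms rtrancl_edges_in_mono[of C "insert b C"] by (auto simp: connected_from_def)
qed

lemma finite_connected_subset_through:
  assumes "(z, y) \<in> (edges_in W)\<^sup>*" "z \<in> W"
  shows "\<exists>C. finite C \<and> connected_from C z \<and> y \<in> C \<and> C \<subseteq> W"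
  using assms(1)
proof (induction rule: rtrancl_induct)
  case base
  then show ?case using assms(2) connected_from_singleton by blast
next
  case (step y b)
  then obtain C where "finite C" "connected_from C z" "y \<in> C" "C \<subseteq> W"
    by blast
  with step(2) show ?case
    by (intro exI[of _ "insert b C"]) (auto simp: edges_in_def intro: connected_from_insert_adj)
qed

definition ray :: "'d::finite site \<Rightarrow> 'd \<Rightarrow> nat \<Rightarrow> 'd site" where
  "ray x i j = x + int j *s unit_site i"

lemma ray_0 [simp]: "ray x i 0 = x"
  by (simp add: ray_def vec_eq_iff)

lemma ray_Suc: "ray x i (Suc j) = ray x i j + unit_site i"
  by (simp add: ray_def vec_eq_iff algebra_simps)

lemma adj_ray_Suc: "adj (ray x i j) (ray x i (Suc j))"
  unfolding ray_Suc by (rule adj_add_unit_site)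

lemma inj_ray: "inj (ray x i)"
  by (auto simp: inj_def ray_def vec_eq_iff unit_site_def)

lemma card_ray: "card (ray x i ` {..k}) = Suc k"
  using inj_ray[of x i] by (simp add: card_image inj_on_subset)

lemma connected_from_ray: "connected_from (ray x i ` {..k}) x"
  unfolding connected_from_def
proof (intro conjI ballI)
  show "x \<in> ray x i ` {..k}"
    by (metis atMost_iff image_eqI le0 ray_0)
  fix y assume "y \<in> ray x i ` {..k}"
  then obtain j where j: "j \<le> k" "y = ray x i j" by auto
  have "(x, ray x i j) \<in> (edges_in (ray x i ` {..k}))\<^sup>*" if "j \<le> k" for j
    using that
  proof (induction j)
    case (Suc j)
    then have "(ray x i j, ray x i (Suc j)) \<in> edges_in (ray x i ` {..k})"
      using adj_ray_Suc by (auto simp: edges_in_def)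
    with Suc show ?case by (meson Suc_leD rtrancl.rtrancl_into_rtrancl)
  qed simp
  with j show "(x, y) \<in> (edges_in (ray x i ` {..k}))\<^sup>*" by simp
qed

fun walk_from :: "'d::finite site \<Rightarrow> 'd site list \<Rightarrow> 'd site list" where
  "walk_from z [] = [z]"
| "walk_from z (d # ds) = z # walk_from (z + d) ds"

fun walk_steps :: "'d::finite site list \<Rightarrow> 'd site list" where
  "walk_steps (a # b # xs) = (b - a) # walk_steps (b # xs)"
| "walk_steps _ = []"

lemma walk_from_walk_steps: "ps \<noteq> [] \<Longrightarrow> walk_from (hd ps) (walk_steps ps) = ps"
  by (induction ps rule: walk_steps.induct) auto

lemma length_walk_steps: "length (walk_steps ps) = length ps - 1"
  by (induction ps rule: walk_steps.induct) auto

lemma walk_steps_subset_unit_steps: "successively adj ps \<Longrightarrow> set (walk_steps ps) \<subseteq> unit_steps"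
  by (induction ps rule: walk_steps.induct) (auto simp: adj_imp_diff_in_unit_steps)

lemma rtrancl_exit_edge:
  assumes "(z, y) \<in> R\<^sup>*" "z \<in> S" "y \<notin> S"
  shows "\<exists>u v. u \<in> S \<and> v \<notin> S \<and> (u, v) \<in> R"
  using assms by (induction rule: rtrancl_induct) blast+

text \<open>Going out to a new site and straight back keeps a walk rooted at \<open>z\<close>, so every animal of
  size \<open>k + 1\<close> is the trace of a walk with \<open>2 k\<close> unit steps.\<close>

lemma exists_walk_visiting:
  assumes "finite G" "connected_from G z" "k < card G"
  shows "\<exists>ps. ps \<noteq> [] \<and> hd ps = z \<and> successively adj ps \<and> set ps \<subseteq> G
    \<and> card (set ps) = Suc k \<and> length ps = Suc (2 * k)"
  using assms(3)
proof (induction k)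
  case 0
  have "z \<in> G" using assms(2) by (simp add: connected_from_def)
  then show ?case by (intro exI[of _ "[z]"]) auto
next
  case (Suc k)
  then obtain ps where ps: "ps \<noteq> []" "hd ps = z" "successively adj ps" "set ps \<subseteq> G"
    "card (set ps) = Suc k" "length ps = Suc (2 * k)"
    by auto
  have "set ps \<noteq> G"
    using Suc.prems ps(5) by auto
  then obtain y where y: "y \<in> G" "y \<notin> set ps"
    using ps(4) by blast
  have "z \<in> set ps" using ps(1,2) by (cases ps) auto
  moreover have "(z, y) \<in> (edges_in G)\<^sup>*"
    using assms(2) y by (auto simp: connected_from_def)
  ultimately obtain u v where uv: "u \<in> set ps" "v \<notin> set ps" "(u, v) \<in> edges_in G"
    using rtrancl_exit_edge[of z y _ "set ps"] y(2) by blast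
  then have "adj u v" "adj v u" "v \<in> G"
    by (auto simp: edges_in_def adj_commute)
  obtain as bs where ps_eq: "ps = as @ u # bs"
    using split_list[OF uv(1)] by blast
  define ps' where "ps' = as @ u # v # u # bs"
  have "successively adj ps'"
    using ps(3) \<open>adj u v\<close> \<open>adj v u\<close>
    unfolding ps'_def ps_eq successively_append_iff by simp
  moreover have "hd ps' = z"
    using ps(2) unfolding ps_eq ps'_def by (cases as) auto
  moreover have "set ps' = insert v (set ps)"
    unfolding ps'_def ps_eq by auto
  ultimately show ?case
    using ps uv(2) \<open>v \<in> G\<close> by (intro exI[of _ ps']) (auto simp: ps'_def ps_eq)
qed

lemma animals_subset_walks:
  assumes "m \<ge> 1"
  shows "animals z m \<subseteq> (\<lambda>ds. set (walk_from z ds)) ` {ds. set ds \<subseteq> unit_steps \<and> length ds = 2 * (m - 1)}"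
proof
  fix G assume "G \<in> animals z m"
  then have G: "finite G" "connected_from G z" "card G = m"
    by (auto simp: animals_def)
  then obtain ps where ps: "ps \<noteq> []" "hd ps = z" "successively adj ps" "set ps \<subseteq> G"
    "card (set ps) = Suc (m - 1)" "length ps = Suc (2 * (m - 1))"
    using exists_walk_visiting[OF G(1,2), of "m - 1"] assms by auto
  have "set ps = G"
    using ps(4,5) G(1,3) assms by (intro card_subset_eq) auto
  moreover have "walk_from z (walk_steps ps) = ps"
    using walk_from_walk_steps[OF ps(1)] ps(2) by simp
  ultimately show "G \<in> (\<lambda>ds. set (walk_from z ds)) ` {ds. set ds \<subseteq> unit_steps \<and> length ds = 2 * (m - 1)}"
    using walk_steps_subset_unit_steps[OF ps(3)] ps(6)
    by (intro rev_image_eqI[of "walk_steps ps"]) (auto simp: length_walk_steps)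
qed

lemma animals_0 [simp]: "animals z 0 = {}"
  by (auto simp: animals_def connected_from_def)

lemma finite_animals: "finite (animals z m)"
proof (cases "m = 0")
  case False
  then show ?thesis
    by (intro finite_subset[OF animals_subset_walks] finite_imageI finite_lists_length_eq) auto
qed simp

lemma card_animals_le: "card (animals (z :: 'd::finite site) m) \<le> (2 * CARD('d)) ^ (2 * m)"
proof (cases "m = 0")
  case False
  let ?L = "{ds. set ds \<subseteq> (unit_steps :: 'd site set) \<and> length ds = 2 * (m - 1)}"
  have fin: "finite ?L" by (rule finite_lists_length_eq) simp
  have "card (animals z m) \<le> card ((\<lambda>ds. set (walk_from z ds)) ` ?L)"
    using False by (intro card_mono finite_imageI fin animals_subset_walks) auto
  also have "\<dots> \<le> card ?L"
    by (rule card_image_le[OF fin])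
  also have "\<dots> = card (unit_steps :: 'd site set) ^ (2 * (m - 1))"
    by (rule card_lists_length_eq) simp
  also have "\<dots> \<le> (2 * CARD('d)) ^ (2 * (m - 1))"
    by (rule power_mono[OF card_unit_steps_le]) simp
  also have "\<dots> \<le> (2 * CARD('d)) ^ (2 * m)"
    by (rule power_increasing) auto
  finally show ?thesis .
qed simp

section \<open>Finite toppling procedures\<close>

locale finite_toppling =
  fixes \<eta> :: "'d::finite config" and P :: "'d site \<Rightarrow> real set"
  assumes finite_times: "\<And>x. finite (P x)"
    and legal: "\<And>x s. s \<in> P x \<Longrightarrow> before \<eta> P s x \<ge> 2 * int CARD('d)"
begin

definition toppled :: "'d site set" where
  "toppled = {x. P x \<noteq> {}}"

lemma card_times_pos: "x \<in> toppled \<Longrightarrow> int (card (P x)) \<ge> 1"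
  using finite_times[of x] by (auto simp: toppled_def Suc_le_eq card_gt_0_iff)

lemma final_config_untoppled:
  "P x = {} \<Longrightarrow> final_config \<eta> P x = int (\<eta> x) + (\<Sum>w\<in>nbrs x. int (card (P w)))"
  by (simp add: final_config_def)

lemma final_config_ge_late_topplings:
  assumes "P x \<noteq> {}"
  shows "final_config \<eta> P x \<ge> (\<Sum>w\<in>nbrs x. int (card {t \<in> P w. t \<ge> Max (P x)}))"
proof -
  define L where "L = Max (P x)"
  have L: "L \<in> P x" "\<And>t. t \<in> P x \<Longrightarrow> t \<le> L"
    using finite_times[of x] assms by (auto simp: L_def)
  have card_w: "card (P w) = card {t \<in> P w. t < L} + card {t \<in> P w. t \<ge> L}" for w
  proof -
    have "card (P w) = card ({t \<in> P w. t < L} \<union> {t \<in> P w. t \<ge> L})"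
      by (rule arg_cong[where f = card]) auto
    also have "\<dots> = card {t \<in> P w. t < L} + card {t \<in> P w. t \<ge> L}"
      using finite_times[of w] by (intro card_Un_disjoint) auto
    finally show ?thesis .
  qed
  have "{t \<in> P x. t \<ge> L} = {L}"
    using L by force
  then have "final_config \<eta> P x = before \<eta> P L x - 2 * int CARD('d)
      + (\<Sum>w\<in>nbrs x. int (card {t \<in> P w. t \<ge> L}))"
    unfolding final_config_def before_def card_w by (simp add: sum.distrib algebra_simps)
  with legal[OF L(1)] show ?thesis
    by (simp add: L_def)
qed

lemma final_config_nonneg: "final_config \<eta> P x \<ge> 0"
proof (cases "P x = {}")
  case True
  then show ?thesis by (simp add: final_config_untoppled sum_nonneg)
next
  case False
  have "0 \<le> (\<Sum>w\<in>nbrs x. int (card {t \<in> P w. t \<ge> Max (P x)}))"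
    by (simp add: sum_nonneg)
  with final_config_ge_late_topplings[OF False] show ?thesis by linarith
qed

lemma final_config_ge_card_nbr:
  assumes "P x = {}" "adj x w"
  shows "final_config \<eta> P x \<ge> int (card (P w))"
  unfolding final_config_untoppled[OF assms(1)]
  using assms(2) member_le_sum[of w "nbrs x" "\<lambda>w. int (card (P w))"] by (simp add: in_nbrs_iff)

lemma final_config_pos_if_late_nbr:
  assumes "P x \<noteq> {}" "adj x w" "t \<in> P w" "t \<ge> Max (P x)"
  shows "final_config \<eta> P x \<ge> 1"
proof -
  have "1 \<le> int (card {t \<in> P w. t \<ge> Max (P x)})"
    using assms(3,4) finite_times[of w] by (auto simp: card_gt_0_iff Suc_le_eq)
  also have "\<dots> \<le> (\<Sum>w\<in>nbrs x. int (card {t \<in> P w. t \<ge> Max (P x)}))"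
    using assms(2) by (intro member_le_sum) (auto simp: in_nbrs_iff)
  finally show ?thesis
    using final_config_ge_late_topplings[OF assms(1)] by linarith
qed

text \<open>Of two neighbours, the one whose last toppling comes later (or that never topples) sends a
  grain to the other one after the other one's last toppling.\<close>

lemma final_config_pos_at_nbr:
  assumes "x \<in> toppled" "final_config \<eta> P x \<le> 0" "adj x y"
  shows "final_config \<eta> P y > 0"
proof (cases "P y = {}")
  case True
  then show ?thesis
    using final_config_ge_card_nbr[OF True, of x] card_times_pos[OF assms(1)] assms(3)
    by (simp add: adj_commute)
next
  case False
  then have "Max (P y) \<in> P y" "Max (P x) \<in> P x"
    using assms(1) finite_times by (auto simp: toppled_def)
  have "P x \<noteq> {}"
    using assms(1) by (simp add: toppled_def)
  show ?thesis
  proof (cases "Max (P y) \<ge> Max (P x)")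
    case True
    with final_config_pos_if_late_nbr[OF \<open>P x \<noteq> {}\<close> assms(3) \<open>Max (P y) \<in> P y\<close>] assms(2)
    show ?thesis by simp
  next
    case False
    with final_config_pos_if_late_nbr[OF \<open>P y \<noteq> {}\<close> _ \<open>Max (P x) \<in> P x\<close>] assms(3)
    show ?thesis by (simp add: adj_commute)
  qed
qed

text \<open>A toppling inside \<open>G\<close> returns at most \<open>2 d\<close> grains to \<open>G\<close>, and by closedness no toppling
  outside \<open>G\<close> feeds \<open>G\<close>.\<close>

lemma sum_final_config_le:
  assumes "finite G" and closed: "\<And>x y. x \<in> G \<Longrightarrow> y \<in> toppled \<Longrightarrow> adj x y \<Longrightarrow> y \<in> G"
  shows "(\<Sum>x\<in>G. final_config \<eta> P x) \<le> (\<Sum>x\<in>G. int (\<eta> x))"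
proof -
  define c where "c w = int (card (P w))" for w
  have c_untoppled: "w \<notin> toppled \<Longrightarrow> c w = 0" for w
    by (simp add: c_def toppled_def)
  have inner: "(\<Sum>w\<in>nbrs x. c w) = (\<Sum>w\<in>G. if adj x w then c w else 0)" if "x \<in> G" for x
  proof -
    have "(\<Sum>w\<in>nbrs x. c w) = (\<Sum>w\<in>nbrs x \<inter> G. c w)"
      by (rule sum.mono_neutral_right) (use that closed c_untoppled in \<open>force simp: in_nbrs_iff\<close>)+
    also have "nbrs x \<inter> G = {w\<in>G. adj x w}"
      by (auto simp: in_nbrs_iff)
    finally show ?thesis
      by (simp add: sum.inter_filter assms(1))
  qed
  have "(\<Sum>x\<in>G. \<Sum>w\<in>nbrs x. c w) = (\<Sum>x\<in>G. \<Sum>w\<in>G. if adj x w then c w else 0)"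
    by (rule sum.cong) (simp_all add: inner)
  also have "\<dots> = (\<Sum>w\<in>G. \<Sum>x\<in>G. if adj x w then c w else 0)"
    by (rule sum.swap)
  also have "\<dots> = (\<Sum>w\<in>G. c w * int (card {x\<in>G. adj x w}))"
    using assms(1) by (intro sum.cong) (simp_all flip: sum.inter_filter)
  also have "\<dots> \<le> (\<Sum>w\<in>G. c w * (2 * int CARD('d)))"
  proof (intro sum_mono mult_left_mono)
    fix w
    have "card {x\<in>G. adj x w} \<le> card (nbrs w)"
      by (rule card_mono) (auto simp: in_nbrs_iff adj_commute)
    then show "int (card {x\<in>G. adj x w}) \<le> 2 * int CARD('d)"
      using card_nbrs_le[of w] by linarith
  qed (simp add: c_def)
  finally have "(\<Sum>x\<in>G. \<Sum>w\<in>nbrs x. c w) \<le> (\<Sum>w\<in>G. c w * (2 * int CARD('d)))" .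
  moreover have "(\<Sum>x\<in>G. final_config \<eta> P x)
      = (\<Sum>x\<in>G. int (\<eta> x)) - (\<Sum>x\<in>G. c x * (2 * int CARD('d))) + (\<Sum>x\<in>G. \<Sum>w\<in>nbrs x. c w)"
    unfolding final_config_def c_def by (simp add: sum.distrib sum_subtractf algebra_simps)
  ultimately show ?thesis by linarith
qed

text \<open>Translating by a unit vector maps the sites left empty injectively to occupied ones, and
  conservation bounds the occupied sites by the initial mass.\<close>

lemma card_le_twice_sum_config:
  assumes "finite G"
    and closed: "\<And>x y. x \<in> G \<Longrightarrow> adj x y \<Longrightarrow> x \<in> toppled \<or> y \<in> toppled \<Longrightarrow> y \<in> G"
    and empty_toppled: "\<And>x. x \<in> G \<Longrightarrow> final_config \<eta> P x \<le> 0 \<Longrightarrow> x \<in> toppled"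
  shows "int (card G) \<le> 2 * (\<Sum>x\<in>G. int (\<eta> x))"
proof -
  define Pos where "Pos = {x \<in> G. final_config \<eta> P x > 0}"
  define Z where "Z = {x \<in> G. final_config \<eta> P x \<le> 0}"
  obtain i :: 'd where True by blast
  have shift: "x + unit_site i \<in> Pos" if "x \<in> Z" for x
  proof -
    have "x \<in> toppled" "x \<in> G" "final_config \<eta> P x \<le> 0"
      using that empty_toppled by (auto simp: Z_def)
    then show ?thesis
      using closed[of x "x + unit_site i"] final_config_pos_at_nbr[of x "x + unit_site i"]
        adj_add_unit_site[of x i] by (simp add: Pos_def)
  qed
  then have "(\<lambda>x. x + unit_site i) ` Z \<subseteq> Pos"
    by blast
  moreover have "inj_on (\<lambda>x. x + unit_site i) Z"
    by (auto simp: inj_on_def)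
  moreover have "finite Pos"
    using assms(1) by (simp add: Pos_def)
  ultimately have "card Z \<le> card Pos"
    by (metis card_inj_on_le)
  moreover have "card G = card Pos + card Z"
  proof -
    have "G = Pos \<union> Z" "Pos \<inter> Z = {}"
      by (auto simp: Pos_def Z_def)
    then show ?thesis
      using assms(1) by (simp add: card_Un_disjoint)
  qed
  moreover have "int (card Pos) \<le> (\<Sum>x\<in>Pos. final_config \<eta> P x)"
  proof -
    have "int (card Pos) = (\<Sum>x\<in>Pos. 1)" by simp
    also have "\<dots> \<le> (\<Sum>x\<in>Pos. final_config \<eta> P x)"
      by (rule sum_mono) (simp add: Pos_def)
    finally show ?thesis .
  qed
  moreover have "(\<Sum>x\<in>Pos. final_config \<eta> P x) \<le> (\<Sum>x\<in>G. final_config \<eta> P x)"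
    using assms(1) by (intro sum_mono2) (auto simp: Pos_def final_config_nonneg)
  moreover have "(\<Sum>x\<in>G. final_config \<eta> P x) \<le> (\<Sum>x\<in>G. int (\<eta> x))"
    using assms(1) closed by (intro sum_final_config_le) auto
  ultimately show ?thesis by linarith
qed

definition hull_edges :: "('d site \<times> 'd site) set" where
  "hull_edges = {(a, b). adj a b \<and> (a \<in> toppled \<or> b \<in> toppled)}"

definition toppling_hull :: "'d site set \<Rightarrow> 'd site set" where
  "toppling_hull C = {y. \<exists>c\<in>C. (c, y) \<in> hull_edges\<^sup>*}"

lemma subset_toppling_hull: "C \<subseteq> toppling_hull C"
  by (auto simp: toppling_hull_def)

lemma toppling_hull_closed:
  "x \<in> toppling_hull C \<Longrightarrow> adj x y \<Longrightarrow> x \<in> toppled \<or> y \<in> toppled \<Longrightarrow> y \<in> toppling_hull C"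
  unfolding toppling_hull_def hull_edges_def by (blast intro: rtrancl_into_rtrancl)

lemma toppling_hull_cases:
  assumes "y \<in> toppling_hull C"
  shows "y \<in> C \<or> y \<in> toppled \<or> (\<exists>a\<in>toppled. adj a y)"
proof -
  obtain c where "c \<in> C" "(c, y) \<in> hull_edges\<^sup>*"
    using assms by (auto simp: toppling_hull_def)
  from \<open>(c, y) \<in> hull_edges\<^sup>*\<close> show ?thesis
    by (cases rule: rtranclE) (use \<open>c \<in> C\<close> in \<open>auto simp: hull_edges_def\<close>)
qed

lemma finite_toppling_hull:
  assumes "finite toppled" "finite C"
  shows "finite (toppling_hull C)"
proof (rule finite_subset)
  show "toppling_hull C \<subseteq> C \<union> toppled \<union> (\<Union>a\<in>toppled. nbrs a)"
    using toppling_hull_cases by (fastforce simp: in_nbrs_iff)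
qed (use assms in auto)

lemma connected_from_toppling_hull:
  assumes "connected_from C z"
  shows "connected_from (toppling_hull C) z"
proof -
  have path: "(c, y) \<in> (edges_in (toppling_hull C))\<^sup>*" if "c \<in> C" "(c, y) \<in> hull_edges\<^sup>*" for c y
    using that(2)
  proof (induction rule: rtrancl_induct)
    case (step b y)
    then have "b \<in> toppling_hull C" "y \<in> toppling_hull C"
      using that(1) unfolding toppling_hull_def by (auto intro: rtrancl_into_rtrancl)
    with step show ?case
      by (auto simp: edges_in_def hull_edges_def intro: rtrancl_into_rtrancl)
  qed simp
  show ?thesis
    unfolding connected_from_def
  proof (intro conjI ballI)
    show "z \<in> toppling_hull C"
      using assms subset_toppling_hull by (auto simp: connected_from_def)
  next
    fix y assume "y \<in> toppling_hull C"
    then obtain c where c: "c \<in> C" "(c, y) \<in> hull_edges\<^sup>*"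
      by (auto simp: toppling_hull_def)
    have "(z, c) \<in> (edges_in (toppling_hull C))\<^sup>*"
      using assms c(1) rtrancl_edges_in_mono[OF subset_toppling_hull] by (auto simp: connected_from_def)
    with path[OF c] show "(z, y) \<in> (edges_in (toppling_hull C))\<^sup>*"
      by simp
  qed
qed

lemma dense_connected_superset:
  assumes "finite toppled" "finite C" "connected_from C z"
    and "C \<subseteq> toppled \<union> {x. final_config \<eta> P x > 0}"
  shows "\<exists>G. finite G \<and> connected_from G z \<and> C \<subseteq> G \<and> int (card G) \<le> 2 * (\<Sum>x\<in>G. int (\<eta> x))"
proof (intro exI conjI)
  let ?G = "toppling_hull C"
  show "finite ?G"
    using assms(1,2) by (rule finite_toppling_hull)
  show "connected_from ?G z"
    using assms(3) by (rule connected_from_toppling_hull)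
  show "C \<subseteq> ?G"
    by (rule subset_toppling_hull)
  have empty_toppled: "x \<in> toppled" if x: "x \<in> ?G" and nonpos: "final_config \<eta> P x \<le> 0" for x
  proof (rule ccontr)
    assume "x \<notin> toppled"
    then have "P x = {}" "x \<notin> C"
      using assms(4) nonpos by (auto simp: toppled_def)
    then obtain a where "a \<in> toppled" "adj x a"
      using toppling_hull_cases[OF x] \<open>x \<notin> toppled\<close> adj_commute by blast
    then show False
      using final_config_ge_card_nbr[OF \<open>P x = {}\<close>, of a] card_times_pos[of a] nonpos by linarith
  qed
  show "int (card ?G) \<le> 2 * (\<Sum>x\<in>?G. int (\<eta> x))"
  proof (rule card_le_twice_sum_config)
    show "finite ?G" by fact
    show "y \<in> ?G" if "x \<in> ?G" "adj x y" "x \<in> toppled \<or> y \<in> toppled" for x y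
      using that by (rule toppling_hull_closed)
    show "x \<in> toppled" if "x \<in> ?G" "final_config \<eta> P x \<le> 0" for x
      using that by (rule empty_toppled)
  qed
qed

end

section \<open>Legal procedures contain finite subprocedures\<close>

lemma legal_procedureD:
  fixes \<eta> :: "'d::finite config"
  assumes "legal_procedure \<eta> T"
  shows "\<And>x. T x \<subseteq> {0..}" "\<And>x t. finite (T x \<inter> {0..t})"
    "\<And>x s. s \<in> T x \<Longrightarrow> before \<eta> T s x \<ge> 2 * int CARD('d)"
    "\<not> (\<exists>xs ts :: nat \<Rightarrow> _. \<forall>k. ts k \<in> T (xs k) \<and> adj (xs k) (xs (Suc k)) \<and> ts (Suc k) < ts k)"
  using assms unfolding legal_procedure_def by blast+

definition precedes :: "('d::finite site \<Rightarrow> real set) \<Rightarrow> (('d site \<times> real) \<times> ('d site \<times> real)) set" where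
  "precedes T = {((y, t'), (x, t)). t \<in> T x \<and> t' \<in> T y \<and> adj x y \<and> t' < t}"

lemma wf_precedes:
  assumes "legal_procedure \<eta> T"
  shows "wf (precedes T)"
proof (rule ccontr)
  assume "\<not> wf (precedes T)"
  then obtain f where f: "\<And>k. (f (Suc k), f k) \<in> precedes T"
    unfolding wf_iff_no_infinite_down_chain by blast
  define xs where "xs k = fst (f k)" for k
  define ts where "ts k = snd (f k)" for k
  have "\<forall>k. ts k \<in> T (xs k) \<and> adj (xs k) (xs (Suc k)) \<and> ts (Suc k) < ts k"
  proof
    fix k
    show "ts k \<in> T (xs k) \<and> adj (xs k) (xs (Suc k)) \<and> ts (Suc k) < ts k"
      using f[of k] by (cases "f k", cases "f (Suc k)") (auto simp: precedes_def xs_def ts_def)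
  qed
  with legal_procedureD(4)[OF assms] show False
    by blast
qed

lemma finite_predecessors:
  assumes "legal_procedure \<eta> T"
  shows "finite {e. (e, (x, t)) \<in> precedes T}"
proof (rule finite_subset)
  show "{e. (e, (x, t)) \<in> precedes T} \<subseteq> (\<Union>y\<in>nbrs x. {y} \<times> (T y \<inter> {0..t}))"
    using legal_procedureD(1)[OF assms] by (fastforce simp: precedes_def in_nbrs_iff)
qed (use legal_procedureD(2)[OF assms] in auto)

lemma finite_ancestors:
  assumes "legal_procedure \<eta> T"
  shows "finite {e'. (e', e) \<in> (precedes T)\<^sup>+}"
  using wf_precedes[OF assms]
proof (induction e rule: wf_induct_rule)
  case (less e)
  let ?pred = "{e'. (e', e) \<in> precedes T}"
  have "{e'. (e', e) \<in> (precedes T)\<^sup>+} \<subseteq> ?pred \<union> (\<Union>p\<in>?pred. {e'. (e', p) \<in> (precedes T)\<^sup>+})"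
    by (auto elim: tranclE)
  moreover have "finite ?pred"
    using finite_predecessors[OF assms] by (cases e) simp
  ultimately show ?case
    using less.IH by (auto intro: finite_subset)
qed

text \<open>Stopping every site after its last toppling recorded in a set \<open>A\<close> of topplings that is
  closed under \<open>precedes\<close> does not change the configuration seen by the remaining topplings.\<close>

definition truncation :: "('d::finite site \<Rightarrow> real set) \<Rightarrow> ('d site \<times> real) set \<Rightarrow> 'd site \<Rightarrow> real set" where
  "truncation T A x = {t \<in> T x. \<exists>t'. (x, t') \<in> A \<and> t \<le> t'}"

lemma finite_toppling_truncation:
  fixes \<eta> :: "'d::finite config"
  assumes L: "legal_procedure \<eta> T" and "finite A"
    and A_times: "\<And>x t. (x, t) \<in> A \<Longrightarrow> t \<in> T x"
    and A_closed: "\<And>a b. a \<in> A \<Longrightarrow> (b, a) \<in> precedes T \<Longrightarrow> b \<in> A"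
  shows "finite_toppling \<eta> (truncation T A)" "finite {x. truncation T A x \<noteq> {}}"
    "\<And>x. truncation T A x \<subseteq> T x" "\<And>x t. (x, t) \<in> A \<Longrightarrow> t \<in> truncation T A x"
proof -
  define P where "P = truncation T A"
  show P_sub: "P x \<subseteq> T x" for x
    by (auto simp: P_def truncation_def)
  show "(x, t) \<in> A \<Longrightarrow> t \<in> P x" for x t
    using A_times by (auto simp: P_def truncation_def)
  have "{x. P x \<noteq> {}} \<subseteq> fst ` A"
    by (force simp: P_def truncation_def)
  then show "finite {x. P x \<noteq> {}}"
    using \<open>finite A\<close> by (meson finite_imageI finite_subset)
  show "finite_toppling \<eta> P"
  proof
    fix x
    have "P x \<subseteq> (\<Union>t'\<in>snd ` A. T x \<inter> {0..t'})"
      using legal_procedureD(1)[OF L] by (force simp: P_def truncation_def)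
    moreover have "finite (\<Union>t'\<in>snd ` A. T x \<inter> {0..t'})"
      using \<open>finite A\<close> legal_procedureD(2)[OF L] by blast
    ultimately show "finite (P x)"
      by (rule finite_subset)
  next
    fix x s assume s: "s \<in> P x"
    then obtain t' where t': "(x, t') \<in> A" "s \<le> t'"
      by (auto simp: P_def truncation_def)
    have "{t \<in> P y. t < s} = {t \<in> T y. t < s}" if "y \<in> insert x (nbrs x)" for y
    proof
      show "{t \<in> T y. t < s} \<subseteq> {t \<in> P y. t < s}"
      proof
        fix t assume t: "t \<in> {t \<in> T y. t < s}"
        show "t \<in> {t \<in> P y. t < s}"
        proof (cases "y = x")
          case False
          then have "((y, t), (x, t')) \<in> precedes T"
            using t t' that A_times by (auto simp: precedes_def in_nbrs_iff)
          then show ?thesis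
            using A_closed[OF t'(1)] t by (auto simp: P_def truncation_def)
        qed (use t t' in \<open>auto simp: P_def truncation_def\<close>)
      qed
    qed (use P_sub in auto)
    then have "before \<eta> P s x = before \<eta> T s x"
      unfolding before_def by (simp cong: sum.cong)
    then show "2 * int CARD('d) \<le> before \<eta> P s x"
      using legal_procedureD(3)[OF L] s P_sub by auto
  qed
qed

lemma finite_subprocedure:
  fixes \<eta> :: "'d::finite config"
  assumes L: "legal_procedure \<eta> T" and "finite S"
  shows "\<exists>P. finite_toppling \<eta> P \<and> finite {x. P x \<noteq> {}} \<and> (\<forall>x. P x \<subseteq> T x)
    \<and> (\<forall>x\<in>S. T x \<noteq> {} \<longrightarrow> P x \<noteq> {})"
proof -
  define E where "E = (\<lambda>x. (x, SOME t. t \<in> T x)) ` {x \<in> S. T x \<noteq> {}}"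
  define A where "A = E \<union> (\<Union>e\<in>E. {e'. (e', e) \<in> (precedes T)\<^sup>+})"
  have fin: "finite A"
    using \<open>finite S\<close> finite_ancestors[OF L] by (auto simp: A_def E_def)
  have A_times: "t \<in> T x" if xt: "(x, t) \<in> A" for x t
  proof (cases "(x, t) \<in> E")
    case True
    then show ?thesis
      by (auto simp: E_def some_in_eq)
  next
    case False
    then obtain e where "((x, t), e) \<in> (precedes T)\<^sup>+"
      using xt by (auto simp: A_def)
    then obtain e' where "((x, t), e') \<in> precedes T"
      by (auto dest: tranclD)
    then show ?thesis
      by (cases e') (simp add: precedes_def)
  qed
  have A_closed: "b \<in> A" if "a \<in> A" "(b, a) \<in> precedes T" for a b
    using that unfolding A_def by (blast intro: trancl_into_trancl2)
  show ?thesis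
  proof (intro exI[of _ "truncation T A"] conjI allI ballI impI)
    show "finite_toppling \<eta> (truncation T A)"
      using L fin A_times A_closed by (rule finite_toppling_truncation(1))
    show "finite {x. truncation T A x \<noteq> {}}"
      using L fin A_times A_closed by (rule finite_toppling_truncation(2))
    show "truncation T A x \<subseteq> T x" for x
      using L fin A_times A_closed by (rule finite_toppling_truncation(3))
    show "truncation T A x \<noteq> {}" if "x \<in> S" "T x \<noteq> {}" for x
    proof -
      have "(x, SOME t. t \<in> T x) \<in> A"
        using that by (auto simp: A_def E_def)
      with L fin A_times A_closed have "(SOME t. t \<in> T x) \<in> truncation T A x"
        by (rule finite_toppling_truncation(4))
      then show ?thesis
        by blast
    qed
  qed
qed

definition touched :: "'d::finite config \<Rightarrow> ('d site \<Rightarrow> real set) \<Rightarrow> 'd site \<Rightarrow> bool" where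
  "touched \<eta> T x \<longleftrightarrow> T x \<noteq> {} \<or> \<eta> x > 0 \<or> (\<exists>w. adj x w \<and> T w \<noteq> {})"

lemma legal_procedure_dense_superset:
  fixes \<eta> :: "'d::finite config"
  assumes L: "legal_procedure \<eta> T" and "finite C" "connected_from C z"
    and C_touched: "\<And>x. x \<in> C \<Longrightarrow> touched \<eta> T x"
  shows "\<exists>G. finite G \<and> connected_from G z \<and> C \<subseteq> G \<and> int (card G) \<le> 2 * (\<Sum>x\<in>G. int (\<eta> x))"
proof -
  define S where "S = C \<union> (\<Union>c\<in>C. nbrs c)"
  have "finite S"
    using \<open>finite C\<close> by (simp add: S_def)
  obtain P where P: "finite_toppling \<eta> P" "finite {x. P x \<noteq> {}}" "\<And>x. P x \<subseteq> T x"
    "\<And>x. x \<in> S \<Longrightarrow> T x \<noteq> {} \<Longrightarrow> P x \<noteq> {}"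
    using finite_subprocedure[OF L \<open>finite S\<close>] by blast
  interpret finite_toppling \<eta> P
    by (rule P(1))
  have "C \<subseteq> toppled \<union> {x. final_config \<eta> P x > 0}"
  proof
    fix x assume x: "x \<in> C"
    show "x \<in> toppled \<union> {x. final_config \<eta> P x > 0}"
    proof (cases "T x = {}")
      case False
      then show ?thesis
        using x P(4) by (simp add: S_def toppled_def)
    next
      case True
      then have "P x = {}"
        using P(3)[of x] by blast
      consider "\<eta> x > 0" | w where "adj x w" "T w \<noteq> {}"
        using C_touched[OF x] True by (auto simp: touched_def)
      then show ?thesis
      proof cases
        case 1
        have "0 \<le> (\<Sum>w\<in>nbrs x. int (card (P w)))"
          by (simp add: sum_nonneg)
        with 1 show ?thesis
          using final_config_untoppled[OF \<open>P x = {}\<close>] by simp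
      next
        case 2
        then have "w \<in> toppled"
          using x P(4)[of w] by (auto simp: S_def in_nbrs_iff toppled_def)
        then show ?thesis
          using final_config_ge_card_nbr[OF \<open>P x = {}\<close> 2(1)] card_times_pos[of w] by simp
      qed
    qed
  qed
  moreover have "finite toppled"
    using P(2) by (simp add: toppled_def)
  ultimately show ?thesis
    using dense_connected_superset \<open>finite C\<close> \<open>connected_from C z\<close> by blast
qed

section \<open>Parallel toppling\<close>

fun par_config :: "'d::finite config \<Rightarrow> nat \<Rightarrow> 'd site \<Rightarrow> int" where
  "par_config \<eta> 0 = (\<lambda>x. int (\<eta> x))"
| "par_config \<eta> (Suc r) = (\<lambda>x. par_config \<eta> r x
      - (if par_config \<eta> r x \<ge> 2 * int CARD('d) then 2 * int CARD('d) else 0)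
      + int (card {y \<in> nbrs x. par_config \<eta> r y \<ge> 2 * int CARD('d)}))"

definition par_unstable :: "'d::finite config \<Rightarrow> nat \<Rightarrow> 'd site \<Rightarrow> bool" where
  "par_unstable \<eta> r x \<longleftrightarrow> par_config \<eta> r x \<ge> 2 * int CARD('d)"

definition par_times :: "'d::finite config \<Rightarrow> 'd site \<Rightarrow> real set" where
  "par_times \<eta> x = real ` {r. par_unstable \<eta> r x}"

definition par_count :: "'d::finite config \<Rightarrow> 'd site \<Rightarrow> nat \<Rightarrow> nat" where
  "par_count \<eta> x r = card {r'. r' < r \<and> par_unstable \<eta> r' x}"

lemma par_count_Suc: "par_count \<eta> x (Suc r) = par_count \<eta> x r + (if par_unstable \<eta> r x then 1 else 0)"
proof -
  have "{r'. r' < Suc r \<and> par_unstable \<eta> r' x}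
      = {r'. r' < r \<and> par_unstable \<eta> r' x} \<union> (if par_unstable \<eta> r x then {r} else {})"
    by (auto simp: less_Suc_eq)
  then show ?thesis
    by (auto simp: par_count_def card_insert_if)
qed

lemma card_par_times_less: "card {t \<in> par_times \<eta> x. t < real r} = par_count \<eta> x r"
proof -
  have "{t \<in> par_times \<eta> x. t < real r} = real ` {r'. r' < r \<and> par_unstable \<eta> r' x}"
    by (auto simp: par_times_def)
  then show ?thesis
    by (simp add: par_count_def card_image inj_on_def)
qed

lemma par_config_eq_before:
  fixes \<eta> :: "'d::finite config"
  shows "par_config \<eta> r x = before \<eta> (par_times \<eta>) (real r) x"
proof (induction r arbitrary: x)
  case 0
  show ?case
    using card_par_times_less[of \<eta> _ 0] by (simp add: before_def par_count_def)
next
  case (Suc r)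
  have before_eq: "before \<eta> (par_times \<eta>) (real r') x = int (\<eta> x) - 2 * int CARD('d) * int (par_count \<eta> x r')
      + (\<Sum>y\<in>nbrs x. int (par_count \<eta> y r'))" for r' x
    unfolding before_def card_par_times_less by simp
  have IH: "par_config \<eta> r x = int (\<eta> x) - 2 * int CARD('d) * int (par_count \<eta> x r)
      + (\<Sum>y\<in>nbrs x. int (par_count \<eta> y r))"
    using Suc.IH[of x] unfolding before_eq .
  have "(\<Sum>y\<in>nbrs x. int (par_count \<eta> y (Suc r)))
      = (\<Sum>y\<in>nbrs x. int (par_count \<eta> y r) + (if par_unstable \<eta> r y then 1 else 0))"
    by (rule sum.cong) (simp_all add: par_count_Suc)
  also have "\<dots> = (\<Sum>y\<in>nbrs x. int (par_count \<eta> y r)) + int (card {y \<in> nbrs x. par_unstable \<eta> r y})"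
    by (simp add: sum.distrib sum.If_cases Int_def)
  finally show ?case
    unfolding before_eq using IH by (simp add: par_count_Suc par_unstable_def algebra_simps)
qed

lemma legal_par_times:
  fixes \<eta> :: "'d::finite config"
  shows "legal_procedure \<eta> (par_times \<eta>)"
  unfolding legal_procedure_def
proof (intro conjI allI impI notI)
  fix x
  show "par_times \<eta> x \<subseteq> {0..}"
    by (auto simp: par_times_def)
next
  fix x and t :: real
  have "par_times \<eta> x \<inter> {0..t} \<subseteq> real ` {..nat \<lceil>t\<rceil>}"
  proof
    fix s assume "s \<in> par_times \<eta> x \<inter> {0..t}"
    then obtain r where "s = real r" "real r \<le> t"
      by (auto simp: par_times_def)
    then show "s \<in> real ` {..nat \<lceil>t\<rceil>}"
      by (auto intro!: image_eqI[of _ _ r]) linarith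
  qed
  then show "finite (par_times \<eta> x \<inter> {0..t})"
    by (rule finite_subset) auto
next
  fix x s assume "s \<in> par_times \<eta> x"
  then obtain r where "s = real r" "par_unstable \<eta> r x"
    by (auto simp: par_times_def)
  then show "2 * int CARD('d) \<le> before \<eta> (par_times \<eta>) s x"
    by (simp add: par_unstable_def flip: par_config_eq_before)
next
  assume "\<exists>xs ts :: nat \<Rightarrow> _. \<forall>k. ts k \<in> par_times \<eta> (xs k) \<and> adj (xs k) (xs (Suc k)) \<and> ts (Suc k) < ts k"
  then obtain xs and ts :: "nat \<Rightarrow> real" where ts: "\<forall>k. ts k \<in> par_times \<eta> (xs k) \<and> ts (Suc k) < ts k"
    by blast
  have "ts k = real (nat \<lfloor>ts k\<rfloor>)" for k
  proof -
    obtain r where "ts k = real r"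
      using ts by (auto simp: par_times_def)
    then show ?thesis by simp
  qed
  then have "\<forall>k. (nat \<lfloor>ts (Suc k)\<rfloor>, nat \<lfloor>ts k\<rfloor>) \<in> {(m, n). m < n}"
    using ts by (metis (mono_tags) case_prodI mem_Collect_eq of_nat_less_iff)
  then have "\<exists>f. \<forall>k. (f (Suc k), f k) \<in> {(m, n :: nat). m < n}"
    by (intro exI[of _ "\<lambda>k. nat \<lfloor>ts k\<rfloor>"])
  then show False
    using wf_less[unfolded wf_iff_no_infinite_down_chain] by blast
qed

definition sparse_at :: "'d::finite config \<Rightarrow> 'd site \<Rightarrow> nat \<Rightarrow> bool" where
  "sparse_at \<eta> z M \<longleftrightarrow>
    (\<forall>G. finite G \<and> connected_from G z \<and> M \<le> card G \<longrightarrow> 2 * (\<Sum>x\<in>G. int (\<eta> x)) < int (card G))"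

definition sparse :: "'d::finite config \<Rightarrow> bool" where
  "sparse \<eta> \<longleftrightarrow> (\<forall>z. \<exists>M. sparse_at \<eta> z M)"

lemma card_touched_less:
  fixes \<eta> :: "'d::finite config"
  assumes "legal_procedure \<eta> T" "sparse_at \<eta> z M" "finite C" "connected_from C z"
    and "\<And>x. x \<in> C \<Longrightarrow> touched \<eta> T x"
  shows "card C < M"
proof -
  obtain G where G: "finite G" "connected_from G z" "C \<subseteq> G" "int (card G) \<le> 2 * (\<Sum>x\<in>G. int (\<eta> x))"
    using legal_procedure_dense_superset[OF assms(1,3,4,5)] by blast
  then have "card G < M"
    using assms(2) unfolding sparse_at_def by (meson not_le not_less)
  moreover have "card C \<le> card G"
    using G(1,3) by (rule card_mono)
  ultimately show ?thesis by simp
qed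

lemma par_config_ge_nbr_topplings:
  fixes \<eta> :: "'d::finite config"
  assumes stable: "\<And>r. r \<ge> R \<Longrightarrow> \<not> par_unstable \<eta> r w" and "adj y w"
  shows "par_config \<eta> (R + j) w
    \<ge> par_config \<eta> R w + int (card {r. R \<le> r \<and> r < R + j \<and> par_unstable \<eta> r y})"
proof (induction j)
  case (Suc j)
  have "y \<in> nbrs w"
    using \<open>adj y w\<close> by (simp add: in_nbrs_iff adj_commute)
  then have "int (card {y' \<in> nbrs w. par_unstable \<eta> (R + j) y'}) \<ge> (if par_unstable \<eta> (R + j) y then 1 else 0)"
    by (auto simp: card_gt_0_iff Suc_le_eq)
  moreover have "par_config \<eta> (Suc (R + j)) w
      = par_config \<eta> (R + j) w + int (card {y' \<in> nbrs w. par_unstable \<eta> (R + j) y'})"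
    using stable[of "R + j"] by (simp add: par_unstable_def)
  moreover have "{r. R \<le> r \<and> r < R + Suc j \<and> par_unstable \<eta> r y}
      = {r. R \<le> r \<and> r < R + j \<and> par_unstable \<eta> r y} \<union> (if par_unstable \<eta> (R + j) y then {R + j} else {})"
    by (auto simp: less_Suc_eq)
  ultimately show ?case
    using Suc.IH by (simp add: card_insert_if del: par_config.simps split: if_splits)
qed simp

text \<open>A site that stays stable from some time on receives a grain from each toppling of a
  neighbour, so it cannot stay stable next to a site that topples infinitely often.\<close>

lemma infinite_par_topplings_nbr:
  fixes \<eta> :: "'d::finite config"
  assumes "infinite {r. par_unstable \<eta> r y}" "adj y w"
  shows "infinite {r. par_unstable \<eta> r w}"
proof
  assume "finite {r. par_unstable \<eta> r w}"
  then obtain R where R: "{r. par_unstable \<eta> r w} \<subseteq> {..<R}"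
    using finite_nat_bounded by blast
  then have stable: "\<And>r. r \<ge> R \<Longrightarrow> \<not> par_unstable \<eta> r w"
    by force
  define K where "K = nat (2 * int CARD('d) - par_config \<eta> R w)"
  have "infinite ({r. par_unstable \<eta> r y} - {..<R})"
    using assms(1) by simp
  then obtain F where F: "F \<subseteq> {r. par_unstable \<eta> r y} - {..<R}" "finite F" "card F = K"
    using infinite_arbitrarily_large by blast
  obtain j where "F \<subseteq> {..<R + j}"
    using finite_nat_bounded[OF F(2)] by (meson lessThan_subset_iff le_add2 order_trans)
  then have "F \<subseteq> {r. R \<le> r \<and> r < R + j \<and> par_unstable \<eta> r y}"
    using F(1) by auto
  then have "int K \<le> int (card {r. R \<le> r \<and> r < R + j \<and> par_unstable \<eta> r y})"
    using F(3) by (metis (no_types, lifting) card_mono finite_nat_set_iff_bounded mem_Collect_eq of_nat_le_iff)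
  moreover have "par_config \<eta> (R + j) w
      \<ge> par_config \<eta> R w + int (card {r. R \<le> r \<and> r < R + j \<and> par_unstable \<eta> r y})"
    by (rule par_config_ge_nbr_topplings) (use stable assms(2) in auto)
  ultimately have "par_unstable \<eta> (R + j) w"
    unfolding par_unstable_def K_def by linarith
  with stable show False
    by simp
qed

lemma sparse_finite_par_topplings:
  fixes \<eta> :: "'d::finite config"
  assumes "sparse \<eta>"
  shows "finite {r. par_unstable \<eta> r x}"
proof (rule ccontr)
  assume "infinite {r. par_unstable \<eta> r x}"
  obtain i :: 'd where True by blast
  have ray_toppled: "par_times \<eta> (ray x i j) \<noteq> {}" for j
  proof -
    have "infinite {r. par_unstable \<eta> r (ray x i j)}"
    proof (induction j)
      case (Suc j)
      then show ?case
        using infinite_par_topplings_nbr adj_ray_Suc by blast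
    qed (simp add: \<open>infinite {r. par_unstable \<eta> r x}\<close>)
    then show ?thesis
      by (auto simp: par_times_def dest: infinite_imp_nonempty)
  qed
  obtain M where M: "sparse_at \<eta> x M"
    using assms by (auto simp: sparse_def)
  have "card (ray x i ` {..M}) < M"
    using ray_toppled by (intro card_touched_less[OF legal_par_times M]) (auto simp: touched_def connected_from_ray)
  then show False
    by (simp add: card_ray)
qed

lemma sparse_stabilizing_par_times:
  fixes \<eta> :: "'d::finite config"
  assumes "sparse \<eta>"
  shows "stabilizing \<eta> (par_times \<eta>)"
  unfolding stabilizing_def
proof (intro conjI allI)
  show "legal_procedure \<eta> (par_times \<eta>)"
    by (rule legal_par_times)
  show "finite (par_times \<eta> x)" for x
    using sparse_finite_par_topplings[OF assms] by (simp add: par_times_def)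
  fix x
  have "finite (\<Union>y\<in>insert x (nbrs x). {r. par_unstable \<eta> r y})"
    using sparse_finite_par_topplings[OF assms] by auto
  then obtain R where R: "(\<Union>y\<in>insert x (nbrs x). {r. par_unstable \<eta> r y}) \<subseteq> {..<R}"
    using finite_nat_bounded by blast
  have "{t \<in> par_times \<eta> y. t < real R} = par_times \<eta> y" if "y \<in> insert x (nbrs x)" for y
    using R that by (force simp: par_times_def)
  then have "final_config \<eta> (par_times \<eta>) x = before \<eta> (par_times \<eta>) (real R) x"
    unfolding final_config_def before_def by (simp cong: sum.cong)
  also have "\<dots> = par_config \<eta> R x"
    by (simp add: par_config_eq_before)
  also have "\<dots> < 2 * int CARD('d)"
  proof -
    have "\<not> par_unstable \<eta> R x"
      using R by blast
    then show ?thesis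
      by (simp add: par_unstable_def)
  qed
  finally show "final_config \<eta> (par_times \<eta>) x \<le> 2 * int CARD('d) - 1"
    by simp
qed

lemma sparse_stabilizable: "sparse \<eta> \<Longrightarrow> stabilizable \<eta>"
  unfolding stabilizable_def using sparse_stabilizing_par_times by blast

section \<open>The cluster of the origin\<close>

lemma W_inf_touched:
  assumes "x \<in> W_inf \<eta>"
  shows "touched \<eta> (stab_proc \<eta>) x"
proof (rule ccontr)
  assume "\<not> touched \<eta> (stab_proc \<eta>) x"
  then have "stab_proc \<eta> x = {}" "final_config \<eta> (stab_proc \<eta>) x = 0"
    by (auto simp: touched_def final_config_def in_nbrs_iff)
  with assms show False
    by (simp add: W_inf_def T_inf_def V_inf_def)
qed

lemma W_inf0_dense_superset:
  fixes \<eta> :: "'d::finite config"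
  assumes "stabilizable \<eta>" "finite Y" "Y \<subseteq> W_inf0 \<eta>" "Y \<noteq> {}"
  shows "\<exists>G. finite G \<and> connected_from G 0 \<and> Y \<subseteq> G \<and> int (card G) \<le> 2 * (\<Sum>x\<in>G. int (\<eta> x))"
proof -
  let ?W = "W_inf \<eta>"
  have "stabilizing \<eta> (stab_proc \<eta>)"
    using assms(1) unfolding stabilizable_def stab_proc_def by (rule someI_ex)
  then have L: "legal_procedure \<eta> (stab_proc \<eta>)"
    by (simp add: stabilizing_def)
  have W0: "W_inf0 \<eta> = (if 0 \<in> ?W then {y. (0, y) \<in> (edges_in ?W)\<^sup>*} else {})"
    by (simp add: W_inf0_def component_eq)
  then have "0 \<in> ?W"
    using assms(3,4) by (auto split: if_splits)
  have "\<exists>C. finite C \<and> connected_from C 0 \<and> y \<in> C \<and> C \<subseteq> ?W" if "y \<in> Y" for y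
    using that assms(3) finite_connected_subset_through[of 0 y ?W] by (auto simp: W0 split: if_splits)
  then obtain Cy where Cy: "\<And>y. y \<in> Y \<Longrightarrow> finite (Cy y) \<and> connected_from (Cy y) 0 \<and> y \<in> Cy y \<and> Cy y \<subseteq> ?W"
    by metis
  define C where "C = {0} \<union> (\<Union>y\<in>Y. Cy y)"
  have "finite C" "Y \<subseteq> C" "C \<subseteq> ?W"
    using assms(2) Cy \<open>0 \<in> ?W\<close> by (auto simp: C_def)
  moreover have "connected_from C 0"
    unfolding C_def using assms(2) Cy by (intro connected_from_UN) auto
  ultimately show ?thesis
    using legal_procedure_dense_superset[OF L, of C 0] W_inf_touched by (meson order_trans subsetD)
qed

lemma sparse_finite_W_inf0:
  assumes "sparse \<eta>"
  shows "finite (W_inf0 \<eta>)"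
proof (rule ccontr)
  assume "infinite (W_inf0 \<eta>)"
  obtain M where M: "sparse_at \<eta> 0 M"
    using assms by (auto simp: sparse_def)
  obtain Y where Y: "Y \<subseteq> W_inf0 \<eta>" "finite Y" "card Y = Suc M"
    using infinite_arbitrarily_large[OF \<open>infinite (W_inf0 \<eta>)\<close>] by blast
  then obtain G where G: "finite G" "connected_from G 0" "Y \<subseteq> G" "int (card G) \<le> 2 * (\<Sum>x\<in>G. int (\<eta> x))"
    using W_inf0_dense_superset[OF sparse_stabilizable[OF assms]] by force
  then have "M \<le> card G"
    using Y card_mono[OF G(1,3)] by simp
  with M G show False
    unfolding sparse_at_def by fastforce
qed

section \<open>Probability of large dense animals\<close>

lemma product_prob_space_pmf: "product_prob_space (\<lambda>_::'i. measure_pmf p)"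
  by (simp add: product_prob_space_def product_prob_space_axioms_def product_sigma_finite_def
      prob_space_measure_pmf prob_space_imp_sigma_finite)

lemma prob_space_prod_measure: "prob_space (prod_measure p :: ('d::finite config) measure)"
  unfolding prod_measure_def by (rule prob_space_PiM) (simp add: prob_space_measure_pmf)

lemma space_prod_measure [simp]: "space (prod_measure p :: ('d::finite config) measure) = UNIV"
  by (simp add: prod_measure_def space_PiM)

lemma sum_ge_in_sets_prod_measure:
  "{\<eta>::'d::finite config. a \<le> (\<Sum>x\<in>G. real (\<eta> x))} \<in> sets (prod_measure p)"
proof -
  have "(\<lambda>\<eta>::'d config. \<Sum>x\<in>G. real (\<eta> x)) \<in> borel_measurable (prod_measure p)"
    unfolding prod_measure_def by measurable
  then have "{\<eta> \<in> space (prod_measure p). a \<le> (\<Sum>x\<in>G. real (\<eta> x))} \<in> sets (prod_measure p)"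
    by measurable
  then show ?thesis by simp
qed

lemma mgf_nonneg: "mgf p s \<ge> 0"
  unfolding mgf_def by (rule integral_nonneg_AE) auto

lemma nn_integral_exp_sum_prod_measure:
  fixes G :: "'d::finite site set"
  assumes "finite G" and integrable: "integrable (measure_pmf p) (\<lambda>k. exp (s * real k))"
  shows "(\<integral>\<^sup>+\<eta>. ennreal (exp (s * (\<Sum>x\<in>G. real (\<eta> x)))) \<partial>prod_measure p) = ennreal (mgf p s ^ card G)"
proof -
  let ?P = "prod_measure p :: 'd config measure"
  let ?M = "\<lambda>_::'d site. measure_pmf p"
  interpret Pi: product_prob_space ?M "UNIV :: 'd site set"
    by (rule product_prob_space_pmf)
  let ?f = "\<lambda>\<omega>. \<Prod>x\<in>G. ennreal (exp (s * real (\<omega> x)))"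
  have "(\<integral>\<^sup>+\<eta>. ennreal (exp (s * (\<Sum>x\<in>G. real (\<eta> x)))) \<partial>?P) = (\<integral>\<^sup>+\<eta>. ?f (restrict \<eta> G) \<partial>?P)"
  proof (rule nn_integral_cong)
    fix \<eta> :: "'d config"
    have "ennreal (exp (s * (\<Sum>x\<in>G. real (\<eta> x)))) = ennreal (\<Prod>x\<in>G. exp (s * real (\<eta> x)))"
      by (simp add: sum_distrib_left exp_sum[OF \<open>finite G\<close>])
    also have "\<dots> = ?f (restrict \<eta> G)"
      by (simp add: prod_ennreal)
    finally show "ennreal (exp (s * (\<Sum>x\<in>G. real (\<eta> x)))) = ?f (restrict \<eta> G)" .
  qed
  also have "\<dots> = (\<integral>\<^sup>+\<omega>. ?f \<omega> \<partial>distr ?P (PiM G ?M) (\<lambda>\<eta>. restrict \<eta> G))"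
  proof -
    have "(\<lambda>\<eta>. restrict \<eta> G) \<in> measurable ?P (PiM G ?M)"
      unfolding prod_measure_def by (rule measurable_restrict_subset) simp
    then show ?thesis
      by (rule nn_integral_distr[symmetric]) simp
  qed
  also have "distr ?P (PiM G ?M) (\<lambda>\<eta>. restrict \<eta> G) = PiM G ?M"
    unfolding prod_measure_def by (rule Pi.distr_PiM_restrict_finite[OF \<open>finite G\<close>]) simp
  also have "(\<integral>\<^sup>+\<omega>. ?f \<omega> \<partial>PiM G ?M) = (\<Prod>x\<in>G. \<integral>\<^sup>+k. ennreal (exp (s * real k)) \<partial>measure_pmf p)"
    by (rule Pi.product_nn_integral_prod[OF \<open>finite G\<close>]) simp
  also have "\<dots> = (\<Prod>x\<in>G. ennreal (mgf p s))"
    unfolding mgf_def by (simp add: nn_integral_eq_integral[OF integrable])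
  also have "\<dots> = ennreal (mgf p s ^ card G)"
    by (simp add: prod_ennreal ennreal_power mgf_nonneg)
  finally show ?thesis .
qed

lemma prod_measure_sum_ge_le:
  fixes G :: "'d::finite site set"
  assumes "finite G" "s > 0" and "integrable (measure_pmf p) (\<lambda>k. exp (s * real k))"
  shows "measure (prod_measure p) {\<eta>::'d config. a \<le> (\<Sum>x\<in>G. real (\<eta> x))}
    \<le> exp (- s * a) * mgf p s ^ card G"
proof -
  let ?P = "prod_measure p :: 'd config measure"
  interpret P: prob_space ?P
    by (rule prob_space_prod_measure)
  have "emeasure ?P {\<eta> \<in> space ?P. (\<Sum>x\<in>G. real (\<eta> x)) \<ge> a}
      \<le> ennreal (exp (- s * a))
        * (\<integral>\<^sup>+\<eta>. ennreal (exp (s * (\<Sum>x\<in>G. real (\<eta> x)))) * indicator (space ?P) \<eta> \<partial>?P)"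
    by (rule Chernoff_ineq_nn_integral_ge[OF \<open>s > 0\<close>]) (simp_all add: prod_measure_def)
  also have "\<dots> = ennreal (exp (- s * a)) * ennreal (mgf p s ^ card G)"
    using nn_integral_exp_sum_prod_measure[OF \<open>finite G\<close> assms(3)] by simp
  also have "\<dots> = ennreal (exp (- s * a) * mgf p s ^ card G)"
    by (rule ennreal_mult''[symmetric]) (simp add: mgf_nonneg)
  finally show ?thesis
    by (simp add: P.emeasure_eq_measure ennreal_le_iff mgf_nonneg)
qed

definition has_dense_animal :: "'d::finite site \<Rightarrow> nat \<Rightarrow> 'd config set" where
  "has_dense_animal z m = (\<Union>G\<in>animals z m. {\<eta>. real m / 2 \<le> (\<Sum>x\<in>G. real (\<eta> x))})"

lemma has_dense_animalI:
  assumes "finite G" "connected_from G z" "int (card G) \<le> 2 * (\<Sum>x\<in>G. int (\<eta> x))"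
  shows "\<eta> \<in> has_dense_animal z (card G)"
proof -
  have "real (card G) = real_of_int (int (card G))"
    by simp
  also have "\<dots> \<le> real_of_int (2 * (\<Sum>x\<in>G. int (\<eta> x)))"
    using assms(3) by (simp only: of_int_le_iff)
  also have "\<dots> = 2 * (\<Sum>x\<in>G. real (\<eta> x))"
    by simp
  finally show ?thesis
    using assms(1,2) by (auto simp: has_dense_animal_def animals_def)
qed

lemma has_dense_animal_in_sets: "has_dense_animal z m \<in> sets (prod_measure p)"
  unfolding has_dense_animal_def
  by (rule sets.finite_UN[OF finite_animals]) (rule sum_ge_in_sets_prod_measure)

text \<open>Chernoff's bound for each animal, summed over the at most \<open>(2 d) ^ (2 m)\<close> animals of size \<open>m\<close>.\<close>

lemma measure_has_dense_animal_le:
  fixes z :: "'d::finite site"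
  assumes "s > 0" "integrable (measure_pmf p) (\<lambda>k. exp (s * real k))"
  shows "measure (prod_measure p) (has_dense_animal z m)
    \<le> (real ((2 * CARD('d)) ^ 2) * exp (- s / 2) * mgf p s) ^ m"
proof -
  let ?P = "prod_measure p :: 'd config measure"
  have "measure ?P (has_dense_animal z m)
      \<le> (\<Sum>G\<in>animals z m. measure ?P {\<eta>. real m / 2 \<le> (\<Sum>x\<in>G. real (\<eta> x))})"
    unfolding has_dense_animal_def
    by (rule measure_UNION_le[OF finite_animals]) (rule sum_ge_in_sets_prod_measure)
  also have "\<dots> \<le> (\<Sum>G\<in>animals z m. exp (- s * (real m / 2)) * mgf p s ^ m)"
  proof (rule sum_mono)
    fix G assume "G \<in> animals z m"
    then have "finite G" "card G = m"
      by (auto simp: animals_def)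
    then show "measure ?P {\<eta>. real m / 2 \<le> (\<Sum>x\<in>G. real (\<eta> x))} \<le> exp (- s * (real m / 2)) * mgf p s ^ m"
      using prod_measure_sum_ge_le[OF \<open>finite G\<close> assms, of "real m / 2"] by simp
  qed
  also have "\<dots> = real (card (animals z m)) * (exp (- s * (real m / 2)) * mgf p s ^ m)"
    by simp
  also have "\<dots> \<le> real ((2 * CARD('d)) ^ (2 * m)) * (exp (- s * (real m / 2)) * mgf p s ^ m)"
  proof (rule mult_right_mono)
    show "real (card (animals z m)) \<le> real ((2 * CARD('d)) ^ (2 * m))"
      using card_animals_le[of z m] by (simp only: of_nat_le_iff)
  qed (simp add: mgf_nonneg)
  also have "\<dots> = (real ((2 * CARD('d)) ^ 2) * exp (- s / 2) * mgf p s) ^ m"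
  proof -
    have "exp (- s * (real m / 2)) = exp (- s / 2) ^ m"
      by (simp add: exp_of_nat_mult[symmetric] algebra_simps)
    moreover have "real ((2 * CARD('d)) ^ (2 * m)) = real ((2 * CARD('d)) ^ 2) ^ m"
      by (simp add: power_mult)
    ultimately show ?thesis
      by (simp add: power_mult_distrib)
  qed
  finally show ?thesis .
qed

lemma measure_UN_geometric_tail_le:
  fixes M :: "'a measure"
  assumes "finite_measure M" "\<And>m. A m \<in> sets M"
    and "0 \<le> q" "q \<le> 1/4" "\<And>m. measure M (A m) \<le> q ^ m"
  shows "measure M (\<Union>k. A (n + k)) \<le> 2 * q ^ n"
proof -
  interpret finite_measure M by fact
  have summable: "summable (\<lambda>k. q ^ n * q ^ k)"
    using assms(3,4) by (intro summable_mult summable_geometric) auto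
  have le: "norm (measure M (A (n + k))) \<le> q ^ n * q ^ k" for k
    using assms(5)[of "n + k"] by (simp add: power_add)
  have "summable (\<lambda>k. measure M (A (n + k)))"
    by (rule summable_comparison_test'[OF summable]) (use le in auto)
  then have "measure M (\<Union>k. A (n + k)) \<le> (\<Sum>k. measure M (A (n + k)))"
    using assms(2) by (intro finite_measure_subadditive_countably) auto
  also have "\<dots> \<le> (\<Sum>k. q ^ n * q ^ k)"
    by (rule suminf_le[OF _ \<open>summable (\<lambda>k. measure M (A (n + k)))\<close> summable]) (use le in auto)
  also have "\<dots> = q ^ n * (1 / (1 - q))"
    using assms(3,4) by (simp add: suminf_mult[OF summable_geometric] suminf_geometric)
  also have "\<dots> \<le> q ^ n * 2"
    by (rule mult_left_mono) (use assms(3,4) in \<open>auto simp: field_simps\<close>)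
  finally show ?thesis
    by simp
qed

lemma limsup_geometric_null:
  fixes M :: "'a measure"
  assumes "finite_measure M" "\<And>m. A m \<in> sets M"
    and "0 \<le> q" "q \<le> 1/4" "\<And>m. measure M (A m) \<le> q ^ m"
  shows "(\<Inter>n. \<Union>k. A (n + k)) \<in> null_sets M"
proof -
  interpret finite_measure M by fact
  let ?L = "\<Inter>n. \<Union>k. A (n + k)"
  have L_sets: "?L \<in> sets M"
    using assms(2) by (intro sets.countable_INT sets.countable_UN) auto
  have L_le: "measure M ?L \<le> 2 * (1/4) ^ n" for n
  proof -
    have "measure M ?L \<le> measure M (\<Union>k. A (n + k))"
      using assms(2) by (intro finite_measure_mono) auto
    also have "\<dots> \<le> 2 * q ^ n"
      using assms by (rule measure_UN_geometric_tail_le)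
    also have "\<dots> \<le> 2 * (1/4) ^ n"
      using assms(3,4) by (simp add: power_mono)
    finally show ?thesis .
  qed
  have "measure M ?L \<le> 0"
  proof (rule LIMSEQ_le_const)
    show "(\<lambda>n. 2 * (1/4 :: real) ^ n) \<longlonglongrightarrow> 0"
      by (intro tendsto_mult_right_zero LIMSEQ_realpow_zero) auto
  qed (use L_le in auto)
  then show ?thesis
    using L_sets measure_nonneg[of M ?L] by (simp add: null_sets_def emeasure_eq_measure)
qed

lemma not_sparse_null:
  fixes s :: real
  assumes "s > 0" "integrable (measure_pmf p) (\<lambda>k. exp (s * real k))"
    and q: "real ((2 * CARD('d::finite)) ^ 2) * exp (- s / 2) * mgf p s \<le> 1/4"
  shows "\<exists>N \<in> null_sets (prod_measure p :: 'd config measure). {\<eta>. \<not> sparse \<eta>} \<subseteq> N"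
proof (intro bexI)
  let ?P = "prod_measure p :: 'd config measure"
  define N :: "'d config set" where "N = (\<Union>z. \<Inter>n. \<Union>k. has_dense_animal z (n + k))"
  interpret P: prob_space ?P
    by (rule prob_space_prod_measure)
  show "N \<in> null_sets ?P"
    unfolding N_def
  proof (rule null_sets_UN')
    fix z :: "'d site"
    let ?q = "real ((2 * CARD('d)) ^ 2) * exp (- s / 2) * mgf p s"
    show "(\<Inter>n. \<Union>k. has_dense_animal z (n + k)) \<in> null_sets ?P"
    proof (rule limsup_geometric_null[where q = ?q])
      show "finite_measure ?P"
        by (rule P.finite_measure_axioms)
      show "has_dense_animal z m \<in> sets ?P" for m
        by (rule has_dense_animal_in_sets)
      show "measure ?P (has_dense_animal z m) \<le> ?q ^ m" for m
        by (rule measure_has_dense_animal_le[OF assms(1,2)])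
    qed (use q in \<open>simp_all add: mgf_nonneg\<close>)
  qed simp
  show "{\<eta>. \<not> sparse \<eta>} \<subseteq> N"
  proof
    fix \<eta> :: "'d config" assume "\<eta> \<in> {\<eta>. \<not> sparse \<eta>}"
    then obtain z where z: "\<And>M. \<not> sparse_at \<eta> z M"
      by (auto simp: sparse_def)
    have "\<eta> \<in> (\<Union>k. has_dense_animal z (n + k))" for n
    proof -
      obtain G where G: "finite G" "connected_from G z" "n \<le> card G"
        "int (card G) \<le> 2 * (\<Sum>x\<in>G. int (\<eta> x))"
        using z[of n] by (auto simp: sparse_at_def not_less)
      then have "\<eta> \<in> has_dense_animal z (n + (card G - n))"
        using has_dense_animalI[OF G(1,2,4)] by simp
      then show ?thesis by blast
    qed
    then show "\<eta> \<in> N"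
      by (auto simp: N_def)
  qed
qed

lemma two_mult_quarter_power_le:
  assumes "n \<ge> 1"
  shows "2 * (1/4 :: real) ^ n \<le> exp (- ln 2 * real n)"
proof -
  have "(1/2 :: real) ^ n \<le> 1/2"
    using power_decreasing[OF assms, of "1/2 :: real"] by simp
  then have "2 * ((1/2) ^ n * (1/2) ^ n) \<le> (1/2 :: real) ^ n"
    by (simp add: mult_le_cancel_right1)
  also have "\<dots> = exp (- ln 2 * real n)"
  proof -
    have "exp (real n * ln 2) = 2 ^ n"
      by (subst exp_of_nat_mult) simp
    moreover have "exp (- ln 2 * real n) = inverse (exp (real n * ln 2))"
      by (simp add: exp_minus mult.commute)
    ultimately show ?thesis
      by (simp add: power_one_over inverse_eq_divide)
  qed
  finally show ?thesis
    by (simp add: power_mult_distrib[symmetric])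
qed

lemma large_cluster_subset:
  assumes "n \<ge> 1"
  shows "{\<eta>. \<not> stabilizable \<eta> \<or> infinite (W_inf0 \<eta>) \<or> n \<le> card (W_inf0 \<eta>)}
    \<subseteq> {\<eta> :: 'd::finite config. \<not> sparse \<eta>} \<union> (\<Union>k. has_dense_animal 0 (n + k))"
proof
  fix \<eta> :: "'d config"
  assume \<eta>: "\<eta> \<in> {\<eta>. \<not> stabilizable \<eta> \<or> infinite (W_inf0 \<eta>) \<or> n \<le> card (W_inf0 \<eta>)}"
  show "\<eta> \<in> {\<eta>. \<not> sparse \<eta>} \<union> (\<Union>k. has_dense_animal 0 (n + k))"
  proof (cases "sparse \<eta>")
    case True
    then have "stabilizable \<eta>" "finite (W_inf0 \<eta>)" "n \<le> card (W_inf0 \<eta>)"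
      using \<eta> sparse_stabilizable sparse_finite_W_inf0 by auto
    moreover have "W_inf0 \<eta> \<noteq> {}"
      using \<open>n \<le> card (W_inf0 \<eta>)\<close> assms by auto
    ultimately obtain G where G: "finite G" "connected_from G 0" "W_inf0 \<eta> \<subseteq> G"
      "int (card G) \<le> 2 * (\<Sum>x\<in>G. int (\<eta> x))"
      using W_inf0_dense_superset by blast
    then have "n \<le> card G"
      using \<open>n \<le> card (W_inf0 \<eta>)\<close> card_mono[OF G(1,3)] by simp
    then have "\<eta> \<in> has_dense_animal 0 (n + (card G - n))"
      using has_dense_animalI[OF G(1,2,4)] by simp
    then show ?thesis
      by blast
  qed simp
qed

lemma large_cluster_prob_le:
  fixes s :: real
  assumes "s > 0" "integrable (measure_pmf p) (\<lambda>k. exp (s * real k))"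
    and q: "real ((2 * CARD('d::finite)) ^ 2) * exp (- s / 2) * mgf p s \<le> 1/4"
  shows "\<exists>A \<in> sets (prod_measure p :: 'd config measure).
    {\<eta>. \<not> stabilizable \<eta> \<or> infinite (W_inf0 \<eta>) \<or> n \<le> card (W_inf0 \<eta>)} \<subseteq> A
    \<and> measure (prod_measure p) A \<le> exp (- ln 2 * real n)"
proof -
  let ?P = "prod_measure p :: 'd config measure"
  interpret P: prob_space ?P
    by (rule prob_space_prod_measure)
  show ?thesis
  proof (cases "n = 0")
    case True
    show ?thesis
      using True P.prob_space sets.top[of ?P] by (intro bexI[of _ UNIV]) auto
  next
    case False
    let ?q = "real ((2 * CARD('d)) ^ 2) * exp (- s / 2) * mgf p s"
    obtain N where N: "N \<in> null_sets ?P" "{\<eta>. \<not> sparse \<eta>} \<subseteq> N"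
      using not_sparse_null[OF assms] by blast
    define A where "A = N \<union> (\<Union>k. has_dense_animal 0 (n + k))"
    have dense_sets: "(\<Union>k. has_dense_animal 0 (n + k)) \<in> sets ?P"
      by (auto intro!: sets.countable_UN has_dense_animal_in_sets)
    have "measure ?P A \<le> measure ?P N + measure ?P (\<Union>k. has_dense_animal 0 (n + k))"
      unfolding A_def using N(1) dense_sets by (intro measure_Un_le) auto
    also have "\<dots> \<le> 2 * ?q ^ n"
    proof -
      have "measure ?P N = 0"
        using N(1) by (simp add: null_sets_def P.emeasure_eq_measure)
      moreover have "measure ?P (\<Union>k. has_dense_animal 0 (n + k)) \<le> 2 * ?q ^ n"
      proof (rule measure_UN_geometric_tail_le[where q = ?q])
        show "finite_measure ?P"
          by (rule P.finite_measure_axioms)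
        show "has_dense_animal 0 m \<in> sets ?P" for m
          by (rule has_dense_animal_in_sets)
        show "measure ?P (has_dense_animal 0 m) \<le> ?q ^ m" for m
          by (rule measure_has_dense_animal_le[OF assms(1,2)])
      qed (use q in \<open>simp_all add: mgf_nonneg\<close>)
      ultimately show ?thesis
        by simp
    qed
    also have "\<dots> \<le> 2 * (1/4) ^ n"
      using q by (simp add: power_mono mgf_nonneg)
    also have "\<dots> \<le> exp (- ln 2 * real n)"
      using False by (intro two_mult_quarter_power_le) simp
    finally show ?thesis
      using large_cluster_subset[of n] False N dense_sets by (intro bexI[of _ A]) (auto simp: A_def)
  qed
qed

section \<open>Small densities\<close>

lemma mgf_mono:
  assumes "integrable (measure_pmf p) (\<lambda>k. exp (s * real k))"
    and "integrable (measure_pmf p) (\<lambda>k. exp (t * real k))" and "s \<le> t"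
  shows "mgf p s \<le> mgf p t"
  unfolding mgf_def using assms by (intro integral_mono) (auto intro: mult_right_mono)

lemma exp_mult_le_split:
  fixes e s :: real
  assumes "e > 0"
  shows "exp (s * real k) \<le> 1 + e * exp (2 * s * real k) + real k / (4 * e)"
proof (cases "k = 0")
  case False
  define y where "y = exp (s * real k)"
  have "0 \<le> (2 * e * y - 1)\<^sup>2"
    by simp
  then have "y \<le> e * y\<^sup>2 + 1 / (4 * e)"
    using assms by (simp add: power2_eq_square field_simps)
  moreover have "exp (2 * s * real k) = y\<^sup>2"
    by (simp add: y_def power2_eq_square flip: exp_add)
  moreover have "1 / (4 * e) \<le> real k / (4 * e)"
    using False assms by (simp add: divide_right_mono)
  ultimately show ?thesis
    by (simp add: y_def)
qed (use assms in simp)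

lemma mgf_le_split:
  fixes e s :: real
  assumes "e > 0"
    and "integrable (measure_pmf p) (\<lambda>k. exp (s * real k))"
    and "integrable (measure_pmf p) (\<lambda>k. exp (2 * s * real k))"
    and "integrable (measure_pmf p) real"
  shows "mgf p s \<le> 1 + e * mgf p (2 * s) + measure_pmf.expectation p real / (4 * e)"
proof -
  have "mgf p s \<le> measure_pmf.expectation p (\<lambda>k. 1 + e * exp (2 * s * real k) + real k / (4 * e))"
    unfolding mgf_def using assms exp_mult_le_split[OF assms(1)] by (intro integral_mono) auto
  also have "\<dots> = 1 + e * mgf p (2 * s) + measure_pmf.expectation p real / (4 * e)"
    unfolding mgf_def using assms(3,4) by (simp add: measure_pmf.prob_space)
  finally show ?thesis .
qed

text \<open>With \<open>\<epsilon> = \<surd>\<rho> / 4\<close> in the splitting above, a moment generating function at \<open>2 s\<close> of order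
  \<open>1 / \<surd>\<rho>\<close> and a mean \<open>\<rho> \<le> 1/4\<close> give \<open>mgf p s \<le> 1 + 1/4 + \<surd>\<rho> \<le> 2\<close>.\<close>

lemma mgf_le_two:
  assumes integrable: "\<And>t. integrable (measure_pmf p) (\<lambda>k. exp (t * real k))"
    and mean: "measure_pmf.expectation p real = \<rho>" and "0 < \<rho>" "\<rho> < 1/4"
    and mgf_2s: "mgf p (2 * s) \<le> 1 / sqrt \<rho>"
  shows "mgf p s \<le> 2"
proof -
  have "integrable (measure_pmf p) real"
    using mean \<open>0 < \<rho>\<close> not_integrable_integral_eq by force
  have "sqrt \<rho> \<le> sqrt (1/4)"
    using \<open>\<rho> < 1/4\<close> by simp
  then have sqrt_le: "sqrt \<rho> \<le> 1/2"
    by (simp add: real_sqrt_divide)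
  have "mgf p s \<le> 1 + sqrt \<rho> / 4 * mgf p (2 * s) + measure_pmf.expectation p real / (4 * (sqrt \<rho> / 4))"
    using \<open>0 < \<rho>\<close> integrable \<open>integrable (measure_pmf p) real\<close> by (intro mgf_le_split) auto
  also have "measure_pmf.expectation p real / (4 * (sqrt \<rho> / 4)) = sqrt \<rho>"
    using mean \<open>0 < \<rho>\<close> by (simp add: field_simps real_sqrt_mult[symmetric])
  also have "sqrt \<rho> / 4 * mgf p (2 * s) \<le> sqrt \<rho> / 4 * (1 / sqrt \<rho>)"
    using mgf_2s \<open>0 < \<rho>\<close> by (intro mult_left_mono) auto
  also have "sqrt \<rho> / 4 * (1 / sqrt \<rho>) = 1/4"
    using \<open>0 < \<rho>\<close> by simp
  finally show ?thesis
    using sqrt_le by linarith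
qed

lemma eventually_mgf_le_two:
  fixes \<mu> :: "real \<Rightarrow> nat pmf"
  assumes mgf_finite: "\<And>\<rho> t. 0 < \<rho> \<Longrightarrow> \<rho> < 1 \<Longrightarrow> integrable (measure_pmf (\<mu> \<rho>)) (\<lambda>k. exp (t * real k))"
    and mean: "\<And>\<rho>. 0 < \<rho> \<Longrightarrow> \<rho> < 1 \<Longrightarrow> measure_pmf.expectation (\<mu> \<rho>) real = \<rho>"
    and growth: "\<And>a :: real \<Rightarrow> real.
        (\<forall>\<rho>. 0 < \<rho> \<and> \<rho> < 1 \<longrightarrow> a \<rho> \<ge> 0) \<Longrightarrow> filterlim a at_top (at_right 0) \<Longrightarrow>
        filterlim (\<lambda>\<rho>. Sup {x. mgf (\<mu> \<rho>) x \<le> a \<rho>}) at_top (at_right 0)"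
  shows "eventually (\<lambda>\<rho>. mgf (\<mu> \<rho>) s \<le> 2) (at_right 0)"
proof -
  have "filterlim (\<lambda>\<rho>. Sup {x. mgf (\<mu> \<rho>) x \<le> 1 / sqrt \<rho>}) at_top (at_right 0)"
    by (rule growth) (simp, real_asymp)
  then have "eventually (\<lambda>\<rho>. 2 * s + 1 \<le> Sup {x. mgf (\<mu> \<rho>) x \<le> 1 / sqrt \<rho>}) (at_right 0)"
    by (simp add: filterlim_at_top)
  moreover have "eventually (\<lambda>\<rho>::real. 0 < \<rho> \<and> \<rho> < 1/4) (at_right 0)"
    unfolding eventually_at_right_field by (intro exI[of _ "1/4"]) auto
  ultimately show ?thesis
  proof eventually_elim
    case (elim \<rho>)
    let ?S = "{x. mgf (\<mu> \<rho>) x \<le> 1 / sqrt \<rho>}"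
    have integrable: "integrable (measure_pmf (\<mu> \<rho>)) (\<lambda>k. exp (t * real k))" for t
      using elim mgf_finite by simp
    have "mgf (\<mu> \<rho>) 0 = 1"
      by (simp add: mgf_def measure_pmf.prob_space)
    moreover have "1 \<le> 1 / sqrt \<rho>"
      using elim by (simp add: real_sqrt_le_1_iff)
    ultimately have "0 \<in> ?S"
      by simp
    have "\<exists>x\<in>?S. 2 * s < x"
    proof (cases "bdd_above ?S")
      case True
      have "2 * s < Sup ?S"
        using elim by linarith
      then show ?thesis
        using less_cSup_iff[OF _ True] \<open>0 \<in> ?S\<close> by blast
    next
      case False
      then show ?thesis
        unfolding bdd_above_def by (meson linorder_not_le)
    qed
    then obtain x where "x \<in> ?S" "2 * s < x"
      by blast
    then have "mgf (\<mu> \<rho>) (2 * s) \<le> 1 / sqrt \<rho>"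
      using mgf_mono[OF integrable integrable, of "2 * s" x] by simp
    then show ?case
      using elim mean[of \<rho>] by (intro mgf_le_two[OF integrable]) auto
  qed
qed

theorem theorem4p5:
  fixes \<mu> :: "real \<Rightarrow> nat pmf"
  assumes mgf_finite: "\<And>\<rho> t. 0 < \<rho> \<Longrightarrow> \<rho> < 1 \<Longrightarrow> integrable (measure_pmf (\<mu> \<rho>)) (\<lambda>k. exp (t * real k))"
    and mean: "\<And>\<rho>. 0 < \<rho> \<Longrightarrow> \<rho> < 1 \<Longrightarrow> measure_pmf.expectation (\<mu> \<rho>) real = \<rho>"
    and growth: "\<And>a :: real \<Rightarrow> real.
        (\<forall>\<rho>. 0 < \<rho> \<and> \<rho> < 1 \<longrightarrow> a \<rho> \<ge> 0) \<Longrightarrow> filterlim a at_top (at_right 0) \<Longrightarrow>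
        filterlim (\<lambda>\<rho>. Sup {x. mgf (\<mu> \<rho>) x \<le> a \<rho>}) at_top (at_right 0)"
  shows "eventually (\<lambda>\<rho>. \<exists>\<gamma>>0. \<forall>n::nat.
           \<exists>A \<in> sets (prod_measure (\<mu> \<rho>) :: ('d::finite config) measure).
             {\<eta>. \<not> stabilizable \<eta> \<or> infinite (W_inf0 \<eta>) \<or> n \<le> card (W_inf0 \<eta>)} \<subseteq> A \<and>
             measure (prod_measure (\<mu> \<rho>)) A \<le> exp (- \<gamma> * real n)) (at_right 0)"
proof -
  define K where "K = real ((2 * CARD('d)) ^ 2)"
  define s where "s = 2 * ln (8 * K)"
  have "(1::nat) \<le> (2 * CARD('d)) ^ 2"
    using one_le_power[of "2 * CARD('d)" 2] by simp
  then have "K \<ge> 1"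
    unfolding K_def by linarith
  then have "s > 0" and K_exp: "K * exp (- s / 2) = 1/8"
    by (simp_all add: s_def exp_minus exp_ln inverse_eq_divide)
  have "eventually (\<lambda>\<rho>. mgf (\<mu> \<rho>) s \<le> 2) (at_right 0)"
    using assms by (rule eventually_mgf_le_two)
  moreover have "eventually (\<lambda>\<rho>::real. 0 < \<rho> \<and> \<rho> < 1) (at_right 0)"
    unfolding eventually_at_right_field by (intro exI[of _ 1]) auto
  ultimately show ?thesis
  proof eventually_elim
    case (elim \<rho>)
    then have "K * exp (- s / 2) * mgf (\<mu> \<rho>) s \<le> 1/4"
      unfolding K_exp by linarith
    then show ?case
      using large_cluster_prob_le[OF \<open>s > 0\<close> mgf_finite] elim ln_gt_zero[of 2]
      unfolding K_def by (intro exI[of _ "ln 2"]) auto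
  qed
qed

end
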